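(* Let $\chi,b,\nu,\mu>0$, $c\in\mathbb{R}$, $r$ as in the context, and assume $b>2\chi\mu$ and $c>\frac{\chi\mu r^*}{2\sqrt{\nu}(b-\chi\mu)}-2\sqrt{\frac{r^*(b-2\chi\mu)}{b-\chi\mu}}$. For any $u\in\mathcal{E}_1$, $U_1^*(\cdot;u)$ is the unique positive solution in $\mathcal{E}_1$ of $$0=U_{xx}+(c-\chi\Psi_x(x;u))U_x+(r(x)-\chi\nu\Psi(x;u)-(b-\chi\mu)U)U,\quad x\in\mathbb{R}.$$
   Context: $r$ is globally Hölder continuous and bounded, with finite limits $r(\pm\infty)$, $r(-\infty)<0<r(\infty)$, $r(-\infty)\le r(x)\le r(\infty)$; $r^*=\sup r=r(\infty)$. $C^b_{\rm unif}(\mathbb{R})$: bounded uniformly continuous functions; $\Psi(x;u)=\frac{\mu}{2\sqrt\nu}\int_{\mathbb{R}}e^{-\sqrt\nu|x-y|}u(y)dy$; $\mathcal{A}_u(U)=U_{xx}+(c-\chi\Psi_x(x;u))U_x+(r(x)-\chi\nu\Psi(x;u)-(b-\chi\mu)U)U$. Fix $r_1\in(r(-\infty),0)$, $x_1$ with $r(x)\le r_1$ for $x\le x_1$, $\theta_1$ the positive root of $\theta^2+c\theta+r_1=0$, and $U_1^+(x)=\min\{\frac{r^*}{b-\chi\mu},\frac{r^*}{b-\chi\mu}e^{\theta_1(x-x_1)}\}$. For $\varepsilon>0$ let $f_\varepsilon(u)=u(r^*-\varepsilon-\frac{\chi\mu r^*}{b-\chi\mu}-(b-\chi\mu)u)$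 for $u\ge0$, $f_\varepsilon=0$ on $[-\varepsilon,0)$; let $(\phi_\varepsilon,\tilde c_\varepsilon)$ be a decreasing traveling wave: $\phi_\varepsilon''+\tilde c_\varepsilon\phi_\varepsilon'+f_\varepsilon(\phi_\varepsilon)=0$, $\phi_\varepsilon(-\infty)=\frac{(r^*-\varepsilon)(b-\chi\mu)-\chi\mu r^*}{(b-\chi\mu)^2}$, $\phi_\varepsilon(\infty)=-\varepsilon$ (such waves exist with $\tilde c_\varepsilon\to2\sqrt{r^*(b-2\chi\mu)/(b-\chi\mu)}$ as $\varepsilon\to0^+$). With $\delta:=c-\frac{\chi\mu r^*}{2\sqrt\nu(b-\chi\mu)}+2\sqrt{\frac{r^*(b-2\chi\mu)}{b-\chi\mu}}>0$, fix $\varepsilon\in\big(0,\frac{r^*(b-2\chi\mu)}{b-\chi\mu}\big)$ with $\tilde c_\varepsilon>2\sqrt{\frac{r^*(b-2\chi\mu)}{b-\chi\mu}}-\frac\delta2$. Let $\psi_\varepsilon(x)=\phi_\varepsilon(-x)$, translated so that $\psi_\varepsilon(x_0)=0$ for some $x_0>x_1$ with $r(x)\ge r^*-\varepsilon$ for $x>x_0$. $U_1^-=\max\{\psi_\varepsilon,0\}$, $\mathcal{E}_1=\{u\in C^b_{\rm unif}(\mathbb{R}):U_1^-\le u\le U_1^+\}$. For $u\in\mathcal{E}_1$, $U_1^*(x;u)=\lim_{t\to\infty}U(t,x;u)$ where $U(t,x;u)$ solves $U_t=\mathcal{A}_u(U)$, $U(0,\cdot;u)=U_1^+$ (this limit exists,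 lies in $\mathcal{E}_1$ and solves the displayed elliptic equation). *)

theory Defs
  imports "HOL-Analysis.Analysis"
begin

definition Cbunif :: "(real \<Rightarrow> real) \<Rightarrow> bool" where
  "Cbunif u \<longleftrightarrow> bounded (range u) \<and> uniformly_continuous_on UNIV u"

definition Psi :: "real \<Rightarrow> real \<Rightarrow> (real \<Rightarrow> real) \<Rightarrow> real \<Rightarrow> real" where
  "Psi nu mu u x = mu / (2 * sqrt nu) * integral UNIV (\<lambda>y. exp (- sqrt nu * \<bar>x - y\<bar>) * u y)"

text \<open>The operator A_u evaluated at a point, given U, U_x, U_xx at that point.\<close>
definition Aop :: "real \<Rightarrow> real \<Rightarrow> real \<Rightarrow> real \<Rightarrow> real \<Rightarrow> (real \<Rightarrow> real) \<Rightarrow> (real \<Rightarrow> real)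
                   \<Rightarrow> real \<Rightarrow> real \<Rightarrow> real \<Rightarrow> real \<Rightarrow> real" where
  "Aop chi nu mu b c r u W W' W'' x =
     W'' + (c - chi * deriv (Psi nu mu u) x) * W'
     + (r x - chi * nu * Psi nu mu u x - (b - chi * mu) * W) * W"

definition elliptic_sol :: "real \<Rightarrow> real \<Rightarrow> real \<Rightarrow> real \<Rightarrow> real \<Rightarrow> (real \<Rightarrow> real) \<Rightarrow> (real \<Rightarrow> real)
                            \<Rightarrow> (real \<Rightarrow> real) \<Rightarrow> bool" where
  "elliptic_sol chi nu mu b c r u V \<longleftrightarrow>
     (\<exists>V' V''. \<forall>x. (V has_real_derivative V' x) (at x) \<and> (V' has_real_derivative V'' x) (at x)
        \<and> Aop chi nu mu b c r u (V x) (V' x) (V'' x) x = 0)"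

definition parab_sol :: "real \<Rightarrow> real \<Rightarrow> real \<Rightarrow> real \<Rightarrow> real \<Rightarrow> (real \<Rightarrow> real) \<Rightarrow> (real \<Rightarrow> real)
                          \<Rightarrow> (real \<Rightarrow> real) \<Rightarrow> (real \<Rightarrow> real \<Rightarrow> real) \<Rightarrow> bool" where
  "parab_sol chi nu mu b c r u U0 U \<longleftrightarrow>
     (\<forall>x. U 0 x = U0 x)
     \<and> continuous_on ({0..} \<times> UNIV) (\<lambda>p. U (fst p) (snd p))
     \<and> (\<forall>T\<ge>0. bounded ((\<lambda>p. U (fst p) (snd p)) ` ({0..T} \<times> UNIV)))
     \<and> (\<exists>Ut Ux Uxx. \<forall>t>0. \<forall>x.
          ((\<lambda>s. U s x) has_real_derivative Ut t x) (at t)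
        \<and> (U t has_real_derivative Ux t x) (at x)
        \<and> (Ux t has_real_derivative Uxx t x) (at x)
        \<and> Ut t x = Aop chi nu mu b c r u (U t x) (Ux t x) (Uxx t x) x)"

definition U1plus :: "real \<Rightarrow> real \<Rightarrow> real \<Rightarrow> real \<Rightarrow> real \<Rightarrow> real \<Rightarrow> real \<Rightarrow> real" where
  "U1plus rstar chi mu b theta1 x1 x =
     min (rstar / (b - chi * mu)) (rstar / (b - chi * mu) * exp (theta1 * (x - x1)))"

text \<open>f_eps; only its values on [-eps, infinity) matter (the wave takes values there).\<close>
definition feps :: "real \<Rightarrow> real \<Rightarrow> real \<Rightarrow> real \<Rightarrow> real \<Rightarrow> real \<Rightarrow> real" where
  "feps rstar chi mu b eps v =
     (if v \<ge> 0 then v * (rstar - eps - chi * mu * rstar / (b - chi * mu) - (b - chi * mu) * v) else 0)"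

definition decr_tw :: "(real \<Rightarrow> real) \<Rightarrow> real \<Rightarrow> (real \<Rightarrow> real) \<Rightarrow> real \<Rightarrow> real \<Rightarrow> bool" where
  "decr_tw f ct phi a z \<longleftrightarrow>
     antimono phi
     \<and> (\<exists>phi' phi''. \<forall>x. (phi has_real_derivative phi' x) (at x)
          \<and> (phi' has_real_derivative phi'' x) (at x)
          \<and> phi'' x + ct * phi' x + f (phi x) = 0)
     \<and> (phi \<longlongrightarrow> a) at_bot \<and> (phi \<longlongrightarrow> z) at_top"

definition U1minus :: "(real \<Rightarrow> real) \<Rightarrow> real \<Rightarrow> real \<Rightarrow> real" where
  "U1minus phi h x = max (phi (h - x)) 0"

definition E1 :: "real \<Rightarrow> real \<Rightarrow> real \<Rightarrow> real \<Rightarrow> real \<Rightarrow> real \<Rightarrow> (real \<Rightarrow> real) \<Rightarrow> real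
                   \<Rightarrow> (real \<Rightarrow> real) set" where
  "E1 rstar chi mu b theta1 x1 phi h =
     {v. Cbunif v \<and> (\<forall>x. U1minus phi h x \<le> v x \<and> v x \<le> U1plus rstar chi mu b theta1 x1 x)}"

end

theory Submission
  imports Defs
begin

(* Written as V'' + p V' + (q - k V) V = 0, the equation 0 = A_u(V) is a stationary KPP
   equation with bounded coefficients. Every element of E_1 is bounded by r*/(b - chi mu),
   decays like e^(theta_1 x) at -infinity and, because of the lower barrier built from the
   travelling wave, stays above a positive constant near +infinity.

   Positivity: the zero set of a nonnegative solution is closed and also open, because at a
   zero V' vanishes too and the linear bound |V''| <= C (|V'| + |V|) forces V = 0 nearby.

   Uniqueness: for two positive solutions V1, V2 in E_1 the weighted Wronskian
   W = e^P (V1' V2 - V1 V2'), P' = p, satisfies W' = e^P k V1 V2 (V1 - V2), and W -> 0 at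
   -infinity since c + 2 theta_1 > 0. Hence W > 0 wherever V1 > V2, which rules out a later
   contact point, so V1 > V2 on a whole half line. There the ratio w = V1/V2 is increasing
   and bounded, while its slope g = w' obeys g' + G g >= gamma > 0; then g + G w grows
   linearly, which is impossible. By symmetry V1 = V2. *)

section \<open>Calculus on the real line\<close>

lemma DERIV_bound_imp_abs_diff_le:
  fixes f f' :: "real \<Rightarrow> real"
  assumes "\<And>t. t \<in> {a..b} \<Longrightarrow> (f has_real_derivative f' t) (at t)"
    and "\<And>t. t \<in> {a..b} \<Longrightarrow> \<bar>f' t\<bar> \<le> C"
    and "x \<in> {a..b}" "y \<in> {a..b}"
  shows "\<bar>f x - f y\<bar> \<le> C * \<bar>x - y\<bar>"
  using field_differentiable_bound[of "{a..b}" f f' C x y] assms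
  by (simp add: has_field_derivative_at_within)

lemma DERIV_bound_imp_abs_diff_center_le:
  fixes f f' :: "real \<Rightarrow> real"
  assumes "\<And>t. t \<in> {z-d..z+d} \<Longrightarrow> (f has_real_derivative f' t) (at t)"
    and "\<And>t. t \<in> {z-d..z+d} \<Longrightarrow> \<bar>f' t\<bar> \<le> C" and "s \<in> {z-d..z+d}"
  shows "\<bar>f s - f z\<bar> \<le> C * d"
proof -
  have "\<bar>f s - f z\<bar> \<le> C * \<bar>s - z\<bar>"
    using assms by (intro DERIV_bound_imp_abs_diff_le[of "z - d" "z + d" f f']) auto
  also have "\<dots> \<le> C * d"
    using assms(2)[of z] assms(3) by (intro mult_left_mono) auto
  finally show ?thesis .
qed

lemma DERIV_lower_bound_imp_growth:
  fixes f f' :: "real \<Rightarrow> real"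
  assumes "a \<le> b" and "\<And>t. t \<in> {a..b} \<Longrightarrow> (f has_real_derivative f' t) (at t)"
    and "\<And>t. t \<in> {a..b} \<Longrightarrow> c \<le> f' t"
  shows "c * (b - a) \<le> f b - f a"
proof -
  have "f a - c * a \<le> f b - c * b"
  proof (rule DERIV_nonneg_imp_nondecreasing[OF assms(1)])
    fix t assume "a \<le> t" "t \<le> b"
    with assms(2,3)[of t] show "\<exists>y. ((\<lambda>t. f t - c * t) has_real_derivative y) (at t) \<and> 0 \<le> y"
      by (auto intro!: derivative_eq_intros)
  qed
  then show ?thesis
    by (simp add: algebra_simps)
qed

lemma DERIV_nonneg_at_right_minimum:
  fixes f :: "real \<Rightarrow> real"
  assumes "(f has_real_derivative l) (at a)" and "a < b"
    and "\<And>t. a < t \<Longrightarrow> t \<le> b \<Longrightarrow> f a \<le> f t"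
  shows "0 \<le> l"
proof (rule ccontr)
  assume "\<not> 0 \<le> l"
  then obtain d where "d > 0" and "\<And>h. 0 < h \<Longrightarrow> h < d \<Longrightarrow> f (a + h) < f a"
    using DERIV_neg_dec_right[OF assms(1)] by force
  moreover have "a < a + min d (b - a) / 2" "a + min d (b - a) / 2 \<le> b"
    using \<open>d > 0\<close> assms(2) by (auto simp: min_def field_simps)
  ultimately show False
    using assms(3)[of "a + min d (b - a) / 2"] by (smt (verit) field_sum_of_halves)
qed

lemma DERIV_nonpos_at_left_minimum:
  fixes f :: "real \<Rightarrow> real"
  assumes "(f has_real_derivative l) (at b)" and "a < b"
    and "\<And>t. a \<le> t \<Longrightarrow> t < b \<Longrightarrow> f b \<le> f t"
  shows "l \<le> 0"
proof (rule ccontr)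
  assume "\<not> l \<le> 0"
  then obtain d where "d > 0" and "\<And>h. 0 < h \<Longrightarrow> h < d \<Longrightarrow> f (b - h) < f b"
    using DERIV_pos_inc_left[OF assms(1)] by force
  moreover have "a \<le> b - min d (b - a) / 2" "b - min d (b - a) / 2 < b"
    using \<open>d > 0\<close> assms(2) by (auto simp: min_def field_simps)
  ultimately show False
    using assms(3)[of "b - min d (b - a) / 2"] by (smt (verit) field_sum_of_halves)
qed

lemma last_zero_before:
  fixes D :: "real \<Rightarrow> real"
  assumes D: "continuous_on UNIV D" and "y \<le> x" "D y \<le> 0" "0 < D x"
  obtains a where "a < x" "D a = 0" "\<And>t. a < t \<Longrightarrow> t \<le> x \<Longrightarrow> 0 < D t"
proof -
  define L where "L = {t. t \<le> x \<and> D t \<le> 0}"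
  have "closed L"
    unfolding L_def by (intro closed_Collect_conj closed_Collect_le continuous_intros D)
  moreover have "y \<in> L" "bdd_above L"
    using assms(2,3) by (auto simp: L_def bdd_above_def)
  ultimately have a: "Sup L \<in> L"
    by (intro closed_contains_Sup) auto
  have above: "0 < D t" if "Sup L < t" "t \<le> x" for t
    using cSup_upper[OF _ \<open>bdd_above L\<close>, of t] that by (force simp: L_def)
  obtain c where "Sup L \<le> c" "c \<le> x" "D c = 0"
    using IVT'[of D "Sup L" 0 x] a assms(4) continuous_on_subset[OF D] by (auto simp: L_def)
  then have "c = Sup L"
    using above by force
  with a \<open>D c = 0\<close> assms(4) show ?thesis
    using that above by (auto simp: L_def order.order_iff_strict)
qed

lemma first_zero_after:
  fixes D :: "real \<Rightarrow> real"
  assumes D: "continuous_on UNIV D" and "x \<le> y" "D y \<le> 0" "0 < D x"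
  obtains b where "x < b" "D b = 0" "\<And>t. x \<le> t \<Longrightarrow> t < b \<Longrightarrow> 0 < D t"
proof -
  have "continuous_on UNIV (\<lambda>t. D (- t))"
    by (intro continuous_on_compose2[OF D] continuous_intros) auto
  then obtain a where "a < - x" "D (- a) = 0" "\<And>t. a < t \<Longrightarrow> t \<le> - x \<Longrightarrow> 0 < D (- t)"
    using last_zero_before[of "\<lambda>t. D (- t)" "- y" "- x"] assms(2-4) by auto
  then show ?thesis
    using that[of "- a"] by (metis minus_le_iff minus_less_iff minus_minus)
qed

lemma no_bounded_solution_of_growth_inequality:
  fixes w g g' :: "real \<Rightarrow> real"
  assumes w: "\<And>y. X \<le> y \<Longrightarrow> (w has_real_derivative g y) (at y)"
    and g: "\<And>y. X \<le> y \<Longrightarrow> (g has_real_derivative g' y) (at y)"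
    and growth: "\<And>y. X \<le> y \<Longrightarrow> \<gamma> \<le> g' y + G * g y"
    and \<gamma>: "0 < \<gamma>" and G: "0 \<le> G"
    and bounded: "\<And>y. X \<le> y \<Longrightarrow> 0 \<le> w y \<and> w y \<le> B"
  shows False
proof -
  \<comment> \<open>\<open>g + G * w\<close> grows at least linearly, while \<open>G * w\<close> stays bounded\<close>
  have h: "\<gamma> * (y - X) \<le> (g y + G * w y) - (g X + G * w X)" if "X \<le> y" for y
    using that w g growth
    by (intro DERIV_lower_bound_imp_growth[of X y _ "\<lambda>y. g' y + G * g y"])
      (auto intro!: derivative_eq_intros)
  define Y where "Y = X + (\<bar>g X\<bar> + G * B + 1) / \<gamma>"
  have B: "0 \<le> B"
    using bounded[of X] by auto
  have Y: "X \<le> Y"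
    using \<gamma> G B by (simp add: Y_def)
  have "1 \<le> g y" if "Y \<le> y" for y
  proof -
    have "\<gamma> * (Y - X) \<le> \<gamma> * (y - X)"
      using that \<gamma> by (intro mult_left_mono) auto
    then have "\<bar>g X\<bar> + G * B + 1 \<le> (g y + G * w y) - (g X + G * w X)"
      using h[of y] that Y \<gamma> by (simp add: Y_def)
    moreover have "G * w y \<le> G * B" "0 \<le> G * w X"
      using bounded[of y] bounded[of X] that Y G by (auto intro: mult_left_mono)
    ultimately show ?thesis
      using abs_ge_minus_self[of "g X"] by linarith
  qed
  then have "1 * (Y + B + 1 - Y) \<le> w (Y + B + 1) - w Y"
    using w Y B by (intro DERIV_lower_bound_imp_growth[of Y _ w g]) auto
  with bounded[of Y] bounded[of "Y + B + 1"] Y B show False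
    by auto
qed

lemma integral_atMost_has_real_derivative:
  fixes g :: "real \<Rightarrow> real"
  assumes g: "continuous_on UNIV g" "\<And>x. g integrable_on {..x}"
  shows "((\<lambda>x. integral {..x} g) has_real_derivative g t) (at t)"
proof -
  have split: "integral {..x} g = integral {..t-1} g + integral {t-1..x} g"
    if "x \<in> {t-1<..}" for x
  proof -
    have "(g has_integral integral {..t-1} g + integral {t-1..x} g) ({..t-1} \<union> {t-1..x})"
      by (intro has_integral_Un integrable_integral g(2) integrable_continuous_interval
          continuous_on_subset[OF g(1)] negligible_subset[OF negligible_sing[of "t-1"]]) auto
    moreover have "{..t-1} \<union> {t-1..x} = {..x}"
      using that by auto
    ultimately show ?thesis
      by (simp add: integral_unique)
  qed
  have "((\<lambda>x. integral {t-1..x} g) has_real_derivative g t) (at t within {t-1..t+1})"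
    by (intro integral_has_real_derivative continuous_on_subset[OF g(1)]) auto
  then have "((\<lambda>x. integral {..t-1} g + integral {t-1..x} g) has_real_derivative g t) (at t)"
    by (auto simp: at_within_Icc_at intro!: derivative_eq_intros)
  then show ?thesis
    by (rule has_field_derivative_transform_within_open[of _ _ _ "{t-1<..}"]) (use split in auto)
qed

lemma integral_atLeast_has_real_derivative:
  fixes g :: "real \<Rightarrow> real"
  assumes g: "continuous_on UNIV g" "\<And>x. g integrable_on {x..}"
  shows "((\<lambda>x. integral {x..} g) has_real_derivative - g t) (at t)"
proof -
  have split: "integral {x..} g = integral {x..t+1} g + integral {t+1..} g"
    if "x \<in> {..<t+1}" for x
  proof -
    have "(g has_integral integral {x..t+1} g + integral {t+1..} g) ({x..t+1} \<union> {t+1..})"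
      by (intro has_integral_Un integrable_integral g(2) integrable_continuous_interval
          continuous_on_subset[OF g(1)] negligible_subset[OF negligible_sing[of "t+1"]]) auto
    moreover have "{x..t+1} \<union> {t+1..} = {x..}"
      using that by auto
    ultimately show ?thesis
      by (simp add: integral_unique)
  qed
  have "((\<lambda>x. integral {x..t+1} g) has_real_derivative - g t) (at t within {t-1..t+1})"
    by (intro integral_has_real_derivative' continuous_on_subset[OF g(1)]) auto
  then have "((\<lambda>x. integral {x..t+1} g + integral {t+1..} g) has_real_derivative - g t) (at t)"
    by (auto simp: at_within_Icc_at intro!: derivative_eq_intros)
  then show ?thesis
    by (rule has_field_derivative_transform_within_open[of _ _ _ "{..<t+1}"]) (use split in auto)
qed

section \<open>The potential Psi\<close>

lemma has_integral_exp_atMost: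
  fixes a x :: real
  assumes a: "a > 0"
  shows "((\<lambda>y. exp (a * y)) has_integral exp (a * x) / a) {..x}"
proof -
  have h: "((\<lambda>y. exp (- a * y)) has_integral exp (a * x) / a) {-x..}"
    using has_integral_exp_minus_to_infinity[OF a, of "-x"] by simp
  then have "(\<lambda>y. exp (- a * y)) absolutely_integrable_on {-x..}"
    by (intro nonnegative_absolutely_integrable_1) (auto simp: integrable_on_def)
  with h have "(\<lambda>y. exp (a * - y)) absolutely_integrable_on {-x..}
      \<and> integral {-x..} (\<lambda>y. exp (a * - y)) = exp (a * x) / a"
    by (simp add: integral_unique)
  then have "(\<lambda>y. exp (a * y)) absolutely_integrable_on {..x}
      \<and> integral {..x} (\<lambda>y. exp (a * y)) = exp (a * x) / a"
    using has_absolute_integral_reflect_real[of "{-x..}" "{..x}" "\<lambda>y. exp (a * y)"] by auto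
  then show ?thesis
    using set_lebesgue_integral_eq_integral(1) by (metis has_integral_integral)
qed

lemma exp_weighted_integral_atMost:
  fixes a M x :: real and u :: "real \<Rightarrow> real"
  assumes a: "a > 0" and u: "continuous_on UNIV u" "\<And>y. 0 \<le> u y" "\<And>y. u y \<le> M"
  shows "(\<lambda>y. exp (a * y) * u y) integrable_on {..x}"
    and "0 \<le> exp (- a * x) * integral {..x} (\<lambda>y. exp (a * y) * u y)"
    and "exp (- a * x) * integral {..x} (\<lambda>y. exp (a * y) * u y) \<le> M / a"
proof -
  let ?g = "\<lambda>y. exp (a * y) * u y"
  have dom: "((\<lambda>y. M * exp (a * y)) has_integral M * (exp (a * x) / a)) {..x}"
    by (rule has_integral_mult_right[OF has_integral_exp_atMost[OF a]])
  show int: "?g integrable_on {..x}"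
  proof (rule measurable_bounded_by_integrable_imp_integrable_real)
    show "?g \<in> borel_measurable (lebesgue_on {..x})"
      by (intro continuous_imp_measurable_on_sets_lebesgue continuous_intros
          continuous_on_subset[OF u(1)]) auto
    show "(\<lambda>y. M * exp (a * y)) integrable_on {..x}"
      using dom by blast
    show "\<bar>?g y\<bar> \<le> M * exp (a * y)" for y
      using u(2,3)[of y] by simp
  qed auto
  show "0 \<le> exp (- a * x) * integral {..x} ?g"
    using integral_nonneg[OF int] u(2) by simp
  have "integral {..x} ?g \<le> M * (exp (a * x) / a)"
    using integral_le[OF int, of "\<lambda>y. M * exp (a * y)"] integral_unique[OF dom] dom u(3)
    by (force simp: mult.commute)
  then have "exp (- a * x) * integral {..x} ?g \<le> exp (- a * x) * (M * (exp (a * x) / a))"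
    by (intro mult_left_mono) auto
  also have "\<dots> = M / a"
    by (simp add: exp_minus field_simps)
  finally show "exp (- a * x) * integral {..x} ?g \<le> M / a" .
qed

lemma exp_weighted_integral_atLeast:
  fixes a M x :: real and u :: "real \<Rightarrow> real"
  assumes a: "a > 0" and u: "continuous_on UNIV u" "\<And>y. 0 \<le> u y" "\<And>y. u y \<le> M"
  shows "(\<lambda>y. exp (- a * y) * u y) integrable_on {x..}"
    and "0 \<le> exp (a * x) * integral {x..} (\<lambda>y. exp (- a * y) * u y)"
    and "exp (a * x) * integral {x..} (\<lambda>y. exp (- a * y) * u y) \<le> M / a"
proof -
  have "continuous_on UNIV (\<lambda>y. u (- y))"
    by (intro continuous_on_compose2[OF u(1)] continuous_intros) auto
  note reflected = exp_weighted_integral_atMost[OF a this u(2,3), of "- x"]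
  have "(\<lambda>y. exp (- a * - y) * u (- y)) absolutely_integrable_on {..-x}"
    using nonnegative_absolutely_integrable_1[OF reflected(1)] u(2) by simp
  then have "(\<lambda>y. exp (- a * y) * u y) absolutely_integrable_on {x..}
      \<and> integral {x..} (\<lambda>y. exp (- a * y) * u y) = integral {..-x} (\<lambda>y. exp (a * y) * u (- y))"
    using has_absolute_integral_reflect_real[of "{..-x}" "{x..}" "\<lambda>y. exp (- a * y) * u y"]
    by auto
  with reflected show "(\<lambda>y. exp (- a * y) * u y) integrable_on {x..}"
    and "0 \<le> exp (a * x) * integral {x..} (\<lambda>y. exp (- a * y) * u y)"
    and "exp (a * x) * integral {x..} (\<lambda>y. exp (- a * y) * u y) \<le> M / a"
    by (auto simp: set_lebesgue_integral_eq_integral(1))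
qed

lemma exp_weighted_integral_atMost_has_real_derivative:
  fixes a M t :: real and u :: "real \<Rightarrow> real"
  assumes a: "a > 0" and u: "continuous_on UNIV u" "\<And>y. 0 \<le> u y" "\<And>y. u y \<le> M"
  shows "((\<lambda>x. exp (- a * x) * integral {..x} (\<lambda>y. exp (a * y) * u y)) has_real_derivative
      u t - a * (exp (- a * t) * integral {..t} (\<lambda>y. exp (a * y) * u y))) (at t)"
proof -
  have "((\<lambda>x. integral {..x} (\<lambda>y. exp (a * y) * u y)) has_real_derivative exp (a * t) * u t) (at t)"
    by (intro integral_atMost_has_real_derivative continuous_intros u(1)
        exp_weighted_integral_atMost(1)[OF a u])
  then show ?thesis
    by (auto intro!: derivative_eq_intros simp: mult_exp_exp algebra_simps)
qed

lemma exp_weighted_integral_atLeast_has_real_derivative: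
  fixes a M t :: real and u :: "real \<Rightarrow> real"
  assumes a: "a > 0" and u: "continuous_on UNIV u" "\<And>y. 0 \<le> u y" "\<And>y. u y \<le> M"
  shows "((\<lambda>x. exp (a * x) * integral {x..} (\<lambda>y. exp (- a * y) * u y)) has_real_derivative
      a * (exp (a * t) * integral {t..} (\<lambda>y. exp (- a * y) * u y)) - u t) (at t)"
proof -
  have "((\<lambda>x. integral {x..} (\<lambda>y. exp (- a * y) * u y)) has_real_derivative - (exp (- a * t) * u t)) (at t)"
    by (intro integral_atLeast_has_real_derivative continuous_intros u(1)
        exp_weighted_integral_atLeast(1)[OF a u])
  then show ?thesis
    by (auto intro!: derivative_eq_intros simp: mult_exp_exp algebra_simps)
qed

lemma Psi_eq_exp_weighted_integrals:
  fixes nu mu M x :: real and u :: "real \<Rightarrow> real"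
  assumes nu: "nu > 0" and u: "continuous_on UNIV u" "\<And>y. 0 \<le> u y" "\<And>y. u y \<le> M"
  shows "Psi nu mu u x = mu / (2 * sqrt nu) *
           (exp (- sqrt nu * x) * integral {..x} (\<lambda>y. exp (sqrt nu * y) * u y)
          + exp (sqrt nu * x) * integral {x..} (\<lambda>y. exp (- sqrt nu * y) * u y))"
proof -
  define a where "a = sqrt nu"
  have a: "a > 0"
    using nu by (simp add: a_def)
  let ?h = "\<lambda>y. exp (- a * \<bar>x - y\<bar>) * u y"
  have "((\<lambda>y. exp (- a * x) * (exp (a * y) * u y)) has_integral
      exp (- a * x) * integral {..x} (\<lambda>y. exp (a * y) * u y)) {..x}"
    by (intro has_integral_mult_right integrable_integral exp_weighted_integral_atMost[OF a u])
  moreover have "exp (- a * x) * (exp (a * y) * u y) = ?h y" if "y \<in> {..x}" for y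
    using that by (simp add: mult_exp_exp algebra_simps)
  ultimately have left: "(?h has_integral exp (- a * x) * integral {..x} (\<lambda>y. exp (a * y) * u y)) {..x}"
    using has_integral_cong by (metis (no_types, lifting))
  have "((\<lambda>y. exp (a * x) * (exp (- a * y) * u y)) has_integral
      exp (a * x) * integral {x..} (\<lambda>y. exp (- a * y) * u y)) {x..}"
    by (intro has_integral_mult_right integrable_integral exp_weighted_integral_atLeast[OF a u])
  moreover have "exp (a * x) * (exp (- a * y) * u y) = ?h y" if "y \<in> {x..}" for y
    using that by (simp add: mult_exp_exp algebra_simps)
  ultimately have right: "(?h has_integral exp (a * x) * integral {x..} (\<lambda>y. exp (- a * y) * u y)) {x..}"
    using has_integral_cong by (metis (no_types, lifting))
  have "(?h has_integral exp (- a * x) * integral {..x} (\<lambda>y. exp (a * y) * u y)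
      + exp (a * x) * integral {x..} (\<lambda>y. exp (- a * y) * u y)) ({..x} \<union> {x..})"
    by (rule has_integral_Un[OF left right negligible_subset[OF negligible_sing[of x]]]) auto
  moreover have "{..x} \<union> {x..} = (UNIV :: real set)"
    by auto
  ultimately have "(?h has_integral exp (- a * x) * integral {..x} (\<lambda>y. exp (a * y) * u y)
      + exp (a * x) * integral {x..} (\<lambda>y. exp (- a * y) * u y)) UNIV"
    by simp
  then show ?thesis
    unfolding Psi_def a_def by (simp add: integral_unique)
qed

lemma Psi_properties:
  fixes nu mu M :: real and u :: "real \<Rightarrow> real"
  assumes nu: "nu > 0" and mu: "mu > 0"
    and u: "continuous_on UNIV u" "\<And>y. 0 \<le> u y" "\<And>y. u y \<le> M"
  obtains Psi' where "\<And>x. (Psi nu mu u has_real_derivative Psi' x) (at x)"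
    and "\<And>x. 0 \<le> Psi nu mu u x" and "\<And>x. Psi nu mu u x \<le> mu * M / nu"
    and "\<And>x. \<bar>Psi' x\<bar> \<le> mu * M / (2 * sqrt nu)"
proof -
  define a where "a = sqrt nu"
  have a: "a > 0" and aa: "a * a = nu"
    using nu by (simp_all add: a_def)
  define A where "A x = exp (- a * x) * integral {..x} (\<lambda>y. exp (a * y) * u y)" for x
  define B where "B x = exp (a * x) * integral {x..} (\<lambda>y. exp (- a * y) * u y)" for x
  have Psi_eq: "Psi nu mu u = (\<lambda>x. mu / (2 * a) * (A x + B x))"
    using Psi_eq_exp_weighted_integrals[OF nu u] by (auto simp: A_def B_def a_def)
  have A_bounds: "0 \<le> A x" "A x \<le> M / a" and B_bounds: "0 \<le> B x" "B x \<le> M / a" for x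
    unfolding A_def B_def
    using exp_weighted_integral_atMost(2,3)[OF a u] exp_weighted_integral_atLeast(2,3)[OF a u]
    by auto
  have "(A has_real_derivative u x - a * A x) (at x)" "(B has_real_derivative a * B x - u x) (at x)" for x
    unfolding A_def[abs_def] B_def[abs_def]
    by (rule exp_weighted_integral_atMost_has_real_derivative[OF a u]
        exp_weighted_integral_atLeast_has_real_derivative[OF a u])+
  then have "(Psi nu mu u has_real_derivative mu / 2 * (B x - A x)) (at x)" for x
    unfolding Psi_eq using a
    by (auto intro!: derivative_eq_intros simp: field_simps)
  moreover have "\<bar>mu / 2 * (B x - A x)\<bar> \<le> mu * M / (2 * sqrt nu)" for x
  proof -
    have "\<bar>B x - A x\<bar> \<le> M / a"
      using A_bounds[of x] B_bounds[of x] by linarith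
    then have "mu / 2 * \<bar>B x - A x\<bar> \<le> mu / 2 * (M / a)"
      using mu by (intro mult_left_mono) auto
    then show ?thesis
      using mu by (simp add: abs_mult a_def)
  qed
  moreover have "0 \<le> Psi nu mu u x" for x
    unfolding Psi_eq using A_bounds B_bounds a mu by simp
  moreover have "Psi nu mu u x \<le> mu * M / nu" for x
  proof -
    have "mu / (2 * a) * (A x + B x) \<le> mu / (2 * a) * (M / a + M / a)"
      using A_bounds[of x] B_bounds[of x] a mu by (intro mult_left_mono) auto
    also have "\<dots> = mu * M / nu"
      using a by (simp flip: aa add: field_simps)
    finally show ?thesis
      unfolding Psi_eq .
  qed
  ultimately show ?thesis
    using that[of "\<lambda>x. mu / 2 * (B x - A x)"] by blast
qed

section \<open>Stationary KPP equations\<close>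

definition kpp_steady_state :: "(real \<Rightarrow> real) \<Rightarrow> (real \<Rightarrow> real) \<Rightarrow> real
    \<Rightarrow> (real \<Rightarrow> real) \<Rightarrow> (real \<Rightarrow> real) \<Rightarrow> (real \<Rightarrow> real) \<Rightarrow> bool"
  where "kpp_steady_state p q k V V' V'' \<longleftrightarrow>
    (\<forall>x. (V has_real_derivative V' x) (at x) \<and> (V' has_real_derivative V'' x) (at x)
       \<and> V'' x + p x * V' x + (q x - k * V x) * V x = 0)"

lemma kpp_steady_state_continuous:
  assumes "kpp_steady_state p q k V V' V''"
  shows "continuous_on S V"
  using assms unfolding kpp_steady_state_def
  by (auto intro!: continuous_at_imp_continuous_on DERIV_isCont)

lemma vanishes_near_double_zero:
  fixes V V' V'' :: "real \<Rightarrow> real" and A B d z :: real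
  assumes dV: "\<And>t. t \<in> {z-d..z+d} \<Longrightarrow> (V has_real_derivative V' t) (at t)"
    and dV': "\<And>t. t \<in> {z-d..z+d} \<Longrightarrow> (V' has_real_derivative V'' t) (at t)"
    and V'': "\<And>t. t \<in> {z-d..z+d} \<Longrightarrow> \<bar>V'' t\<bar> \<le> A * \<bar>V' t\<bar> + B * \<bar>V t\<bar>"
    and zero: "V z = 0" "V' z = 0"
    and AB: "0 \<le> A" "0 \<le> B" and d: "0 < d" "d \<le> 1" "d * (A + B) < 1"
    and t: "t \<in> {z-d..z+d}"
  shows "V t = 0"
proof -
  let ?I = "{z-d..z+d}"
  have z: "z \<in> ?I"
    using d by auto
  have "continuous_on ?I V" "continuous_on ?I V'"
    using DERIV_isCont[OF dV] DERIV_isCont[OF dV'] by (auto intro!: continuous_at_imp_continuous_on)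
  then obtain y1 y2 where y: "y1 \<in> ?I" "y2 \<in> ?I"
    and max: "\<And>t. t \<in> ?I \<Longrightarrow> \<bar>V t\<bar> \<le> \<bar>V y1\<bar>" "\<And>t. t \<in> ?I \<Longrightarrow> \<bar>V' t\<bar> \<le> \<bar>V' y2\<bar>"
    using continuous_attains_sup[of ?I "\<lambda>t. \<bar>V t\<bar>"] continuous_attains_sup[of ?I "\<lambda>t. \<bar>V' t\<bar>"] z
    by (metis compact_Icc continuous_on_rabs empty_iff)
  define m1 m2 where "m1 = \<bar>V y1\<bar>" and "m2 = \<bar>V' y2\<bar>"
  have m1: "m1 \<le> m2 * d"
    using DERIV_bound_imp_abs_diff_center_le[OF dV _ y(1), of m2] max(2) zero
    by (simp add: m1_def m2_def)
  have "\<bar>V'' s\<bar> \<le> A * m2 + B * m1" if "s \<in> ?I" for s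
  proof -
    have "A * \<bar>V' s\<bar> + B * \<bar>V s\<bar> \<le> A * m2 + B * m1"
      using max that AB by (intro add_mono mult_left_mono) (auto simp: m1_def m2_def)
    with V''[OF that] show ?thesis
      by linarith
  qed
  then have "m2 \<le> (A * m2 + B * m1) * d"
    using DERIV_bound_imp_abs_diff_center_le[OF dV' _ y(2)] zero by (simp add: m2_def)
  also have "\<dots> \<le> (A * m2 + B * m2) * d"
  proof -
    have "m1 \<le> m2"
      using m1 mult_left_le[of d m2] d by (simp add: m2_def)
    then show ?thesis
      using d AB by (intro mult_right_mono add_left_mono mult_left_mono) auto
  qed
  also have "\<dots> = (d * (A + B)) * m2"
    by (simp add: algebra_simps)
  finally have "(1 - d * (A + B)) * m2 \<le> 0"
    by (simp add: algebra_simps)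
  then have "m2 = 0"
    using d(3) by (simp add: mult_le_0_iff m2_def)
  then show ?thesis
    using m1 max(1)[OF t] d by (simp add: m1_def)
qed

lemma kpp_steady_state_linear_bound:
  assumes sol: "kpp_steady_state p q k V V' V''"
    and p: "\<bar>p x\<bar> \<le> P0" and q: "\<bar>q x - k * V x\<bar> \<le> Q"
  shows "\<bar>V'' x\<bar> \<le> P0 * \<bar>V' x\<bar> + Q * \<bar>V x\<bar>"
proof -
  have "V'' x = - (p x * V' x) - (q x - k * V x) * V x"
    using sol unfolding kpp_steady_state_def by (auto simp: algebra_simps)
  then have "\<bar>V'' x\<bar> \<le> \<bar>p x\<bar> * \<bar>V' x\<bar> + \<bar>q x - k * V x\<bar> * \<bar>V x\<bar>"
    by (simp add: abs_mult[symmetric])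
  also have "\<dots> \<le> P0 * \<bar>V' x\<bar> + Q * \<bar>V x\<bar>"
    using p q by (intro add_mono mult_right_mono) auto
  finally show ?thesis .
qed

lemma kpp_steady_state_pos:
  assumes sol: "kpp_steady_state p q k V V' V''"
    and nonneg: "\<And>x. 0 \<le> V x" and p: "\<And>x. \<bar>p x\<bar> \<le> P0" and q: "\<And>x. \<bar>q x - k * V x\<bar> \<le> Q"
    and pos: "0 < V x0"
  shows "0 < V x"
proof -
  have dV: "(V has_real_derivative V' x) (at x)" and dV': "(V' has_real_derivative V'' x) (at x)" for x
    using sol unfolding kpp_steady_state_def by auto
  have P0: "0 \<le> P0" and Q: "0 \<le> Q"
    using p[of 0] q[of 0] by auto
  define Z where "Z = {x. V x = 0}"
  have "closed Z"
    unfolding Z_def by (intro closed_Collect_eq continuous_intros kpp_steady_state_continuous[OF sol])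
  moreover have "open Z"
    unfolding open_contains_ball
  proof
    fix z assume "z \<in> Z"
    then have Vz: "V z = 0"
      by (simp add: Z_def)
    moreover have "V' z = 0"
      by (rule DERIV_local_min[OF dV zero_less_one]) (use Vz nonneg in auto)
    moreover have "\<bar>V'' t\<bar> \<le> P0 * \<bar>V' t\<bar> + Q * \<bar>V t\<bar>" for t
      by (rule kpp_steady_state_linear_bound[OF sol p q])
    moreover define d where "d = 1 / (2 * (1 + P0 + Q))"
    moreover have "0 < d" "d \<le> 1" "d * (P0 + Q) < 1"
      using P0 Q by (auto simp: d_def field_simps)
    ultimately have "V t = 0" if "t \<in> {z-d..z+d}" for t
      using vanishes_near_double_zero[of z d V V' V'' P0 Q t] dV dV' P0 Q that by blast
    then have "ball z d \<subseteq> Z"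
      using ball_subset_cball[of z d] by (auto simp: Z_def cball_eq_atLeastAtMost)
    then show "\<exists>e>0. ball z e \<subseteq> Z"
      using \<open>0 < d\<close> by blast
  qed
  moreover have "x0 \<notin> Z"
    using pos by (simp add: Z_def)
  ultimately have "Z = {}"
    using clopen by auto
  then have "V x \<noteq> 0"
    by (auto simp: Z_def)
  then show ?thesis
    using nonneg[of x] by linarith
qed

lemma kpp_steady_state_integrating_factor:
  assumes sol: "kpp_steady_state p q k V V' V''" and P: "\<And>y. (P has_real_derivative p y) (at y)"
  shows "((\<lambda>y. exp (P y) * V' y) has_real_derivative - exp (P x) * ((q x - k * V x) * V x)) (at x)"
proof -
  have "(V' has_real_derivative V'' x) (at x)" and "V'' x = - (p x * V' x) - (q x - k * V x) * V x"
    using sol unfolding kpp_steady_state_def by (auto simp: algebra_simps)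
  then show ?thesis
    by (auto intro!: derivative_eq_intros P simp: algebra_simps)
qed

lemma kpp_steady_state_gradient_bound:
  assumes sol: "kpp_steady_state p q k V V' V''"
    and P: "\<And>y. (P has_real_derivative p y) (at y)"
    and p: "\<And>y. y \<in> {x..x+1} \<Longrightarrow> \<bar>p y\<bar> \<le> P0"
    and q: "\<And>y. y \<in> {x..x+1} \<Longrightarrow> \<bar>q y - k * V y\<bar> \<le> Q"
    and V: "\<And>y. y \<in> {x..x+1} \<Longrightarrow> \<bar>V y\<bar> \<le> m"
  shows "\<bar>V' x\<bar> \<le> exp P0 * (2 + Q) * m"
proof -
  have dV: "(V has_real_derivative V' y) (at y)" for y
    using sol unfolding kpp_steady_state_def by auto
  have Q: "0 \<le> Q" and m: "0 \<le> m"
    using q[of x] V[of x] by auto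
  have P_growth: "P y \<le> P x + P0" if "y \<in> {x..x+1}" for y
  proof -
    have "\<bar>P y - P x\<bar> \<le> P0 * \<bar>y - x\<bar>"
      using DERIV_bound_imp_abs_diff_le[of x "x + 1" P p P0 y x] P p that by auto
    also have "\<dots> \<le> P0"
      using that p[of x] by (auto intro: mult_left_le)
    finally show ?thesis
      by linarith
  qed
  obtain z where z: "x < z" "z < x + 1" "V (x + 1) - V x = V' z"
    using MVT2[of x "x + 1" V V'] dV by auto
  then have V'z: "\<bar>V' z\<bar> \<le> 2 * m"
    using V[of x] V[of "x + 1"] by auto
  define F F' where "F y = exp (P y) * V' y" and "F' y = - exp (P y) * ((q y - k * V y) * V y)" for y
  have "(F has_real_derivative F' y) (at y)" for y
    using kpp_steady_state_integrating_factor[OF sol P] by (simp add: F_def[abs_def] F'_def)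
  moreover have "\<bar>F' y\<bar> \<le> exp (P x + P0) * (Q * m)" if "y \<in> {x..x+1}" for y
    unfolding F'_def abs_mult abs_minus
    using P_growth[OF that] q[OF that] V[OF that] Q by (intro mult_mono) auto
  ultimately have "\<bar>F x - F z\<bar> \<le> exp (P x + P0) * (Q * m) * \<bar>x - z\<bar>"
    using DERIV_bound_imp_abs_diff_le[of x "x + 1" F F' "exp (P x + P0) * (Q * m)" x z] z
    by auto
  also have "\<dots> \<le> exp (P x + P0) * (Q * m)"
    using z Q m by (intro mult_left_le) auto
  finally have "\<bar>F x\<bar> \<le> exp (P x + P0) * (Q * m) + \<bar>F z\<bar>"
    by linarith
  also have "\<bar>F z\<bar> \<le> exp (P x + P0) * (2 * m)"
    unfolding F_def abs_mult using P_growth[of z] z V'z by (intro mult_mono) auto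
  finally have "exp (P x) * \<bar>V' x\<bar> \<le> exp (P x) * (exp P0 * (2 + Q) * m)"
    by (simp add: F_def abs_mult exp_add algebra_simps)
  then show ?thesis
    by simp
qed

section \<open>Comparison of two positive solutions\<close>

locale kpp_pair =
  fixes p q P :: "real \<Rightarrow> real" and k :: real and V1 V1' V1'' V2 V2' V2'' :: "real \<Rightarrow> real"
  assumes sol1: "kpp_steady_state p q k V1 V1' V1''"
    and sol2: "kpp_steady_state p q k V2 V2' V2''"
    and P_deriv: "\<And>y. (P has_real_derivative p y) (at y)"
    and k_pos: "0 < k" and V1_pos: "\<And>x. 0 < V1 x" and V2_pos: "\<And>x. 0 < V2 x"
begin

lemma V_derivatives:
  "(V1 has_real_derivative V1' x) (at x)" "(V1' has_real_derivative V1'' x) (at x)"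
  "(V2 has_real_derivative V2' x) (at x)" "(V2' has_real_derivative V2'' x) (at x)"
  and V_second_derivatives:
  "V1'' x = - p x * V1' x - (q x - k * V1 x) * V1 x"
  "V2'' x = - p x * V2' x - (q x - k * V2 x) * V2 x"
  using sol1 sol2 unfolding kpp_steady_state_def by (auto simp: algebra_simps)

lemma diff_has_real_derivative: "((\<lambda>x. V1 x - V2 x) has_real_derivative V1' x - V2' x) (at x)"
  by (auto intro!: derivative_eq_intros V_derivatives)

lemma diff_continuous: "continuous_on UNIV (\<lambda>x. V1 x - V2 x)"
  using DERIV_isCont[OF diff_has_real_derivative] by (auto intro: continuous_at_imp_continuous_on)

definition wronskian :: "real \<Rightarrow> real" where
  "wronskian x = exp (P x) * (V1' x * V2 x - V1 x * V2' x)"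

lemma wronskian_has_real_derivative:
  "(wronskian has_real_derivative exp (P x) * k * V1 x * V2 x * (V1 x - V2 x)) (at x)"
proof -
  have "wronskian = (\<lambda>x. exp (P x) * (V1' x * V2 x - V1 x * V2' x))"
    by (simp add: fun_eq_iff wronskian_def)
  moreover have "((\<lambda>x. exp (P x) * (V1' x * V2 x - V1 x * V2' x)) has_real_derivative
      exp (P x) * p x * (V1' x * V2 x - V1 x * V2' x)
      + exp (P x) * (V1'' x * V2 x + V1' x * V2' x - (V1' x * V2' x + V1 x * V2'' x))) (at x)"
    by (auto intro!: derivative_eq_intros P_deriv V_derivatives)
  ultimately show ?thesis
    by (simp add: V_second_derivatives algebra_simps)
qed

lemma wronskian_strict_mono:
  assumes "a < b" and above: "\<And>t. a < t \<Longrightarrow> t < b \<Longrightarrow> V2 t < V1 t"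
  shows "wronskian a < wronskian b"
proof (rule DERIV_pos_imp_increasing_open[OF assms(1)])
  show "\<exists>y. (wronskian has_real_derivative y) (at t) \<and> 0 < y" if "a < t" "t < b" for t
    using wronskian_has_real_derivative above[OF that] V1_pos[of t] V2_pos[of t] k_pos by force
  show "continuous_on {a..b} wronskian"
    using DERIV_isCont[OF wronskian_has_real_derivative] by (auto intro: continuous_at_imp_continuous_on)
qed

lemma wronskian_at_contact:
  assumes "V1 a = V2 a"
  shows "wronskian a = exp (P a) * V2 a * (V1' a - V2' a)"
  using assms by (simp add: wronskian_def algebra_simps)

lemma wronskian_pos_if_above:
  assumes W0: "(wronskian \<longlongrightarrow> 0) at_bot" and above: "V2 x < V1 x"
  shows "0 < wronskian x"
proof (cases "\<exists>y\<le>x. V1 y - V2 y \<le> 0")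
  case True
  then obtain a where a: "a < x" "V1 a - V2 a = 0" and pos: "\<And>t. a < t \<Longrightarrow> t \<le> x \<Longrightarrow> 0 < V1 t - V2 t"
    using last_zero_before[OF diff_continuous] above by (metis diff_gt_0_iff_gt)
  have "0 \<le> V1' a - V2' a"
    by (rule DERIV_nonneg_at_right_minimum[OF diff_has_real_derivative a(1)])
      (use a(2) pos in force)
  then have "0 \<le> wronskian a"
    using wronskian_at_contact[of a] a(2) V2_pos[of a] by simp
  also have "wronskian a < wronskian x"
    using a(1) pos by (intro wronskian_strict_mono) auto
  finally show ?thesis .
next
  case False
  then have above_left: "V2 t < V1 t" if "t \<le> x" for t
    using that by force
  have "wronskian y \<le> wronskian (x - 1)" if "y \<le> x - 1" for y
    using above_left that by (cases "y = x - 1") (auto intro!: less_imp_le wronskian_strict_mono)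
  then have "0 \<le> wronskian (x - 1)"
    by (intro tendsto_upperbound[OF W0]) (auto simp: eventually_at_bot_linorder)
  also have "wronskian (x - 1) < wronskian x"
    using above_left by (intro wronskian_strict_mono) auto
  finally show ?thesis .
qed

lemma stays_above:
  assumes W0: "(wronskian \<longlongrightarrow> 0) at_bot" and above: "V2 x < V1 x" and "x \<le> y"
  shows "V2 y < V1 y"
proof (rule ccontr)
  assume "\<not> V2 y < V1 y"
  then obtain b where b: "x < b" "V1 b - V2 b = 0" and pos: "\<And>t. x \<le> t \<Longrightarrow> t < b \<Longrightarrow> 0 < V1 t - V2 t"
    using first_zero_after[OF diff_continuous, of x y] above \<open>x \<le> y\<close> by auto
  have "V1' b - V2' b \<le> 0"
    by (rule DERIV_nonpos_at_left_minimum[OF diff_has_real_derivative b(1)])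
      (use b(2) pos in force)
  then have "wronskian b \<le> 0"
    using wronskian_at_contact[of b] b(2) V2_pos[of b] by (simp add: mult_nonneg_nonpos)
  moreover have "wronskian x < wronskian b"
    using b(1) pos by (intro wronskian_strict_mono) auto
  ultimately show False
    using wronskian_pos_if_above[OF W0 above] by linarith
qed

definition ratio_slope :: "real \<Rightarrow> real" where
  "ratio_slope x = (V1' x * V2 x - V1 x * V2' x) / V2 x ^ 2"

lemma wronskian_eq_ratio_slope: "wronskian x = exp (P x) * V2 x ^ 2 * ratio_slope x"
  using V2_pos[of x] by (simp add: wronskian_def ratio_slope_def)

lemma ratio_has_real_derivative: "((\<lambda>x. V1 x / V2 x) has_real_derivative ratio_slope x) (at x)"
  using DERIV_divide[OF V_derivatives(1,3), of x] V2_pos[of x]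
  by (simp add: ratio_slope_def power2_eq_square)

definition ratio_slope_deriv :: "real \<Rightarrow> real" where
  "ratio_slope_deriv x = k * V1 x * (V1 x - V2 x) / V2 x - (p x + 2 * V2' x / V2 x) * ratio_slope x"

lemma ratio_slope_has_real_derivative: "(ratio_slope has_real_derivative ratio_slope_deriv x) (at x)"
proof -
  have "ratio_slope = (\<lambda>x. (V1' x * V2 x - V1 x * V2' x) / V2 x ^ 2)"
    by (simp add: fun_eq_iff ratio_slope_def)
  moreover have "((\<lambda>x. (V1' x * V2 x - V1 x * V2' x) / V2 x ^ 2) has_real_derivative
      ((V1'' x * V2 x + V1' x * V2' x - (V1' x * V2' x + V1 x * V2'' x)) * V2 x ^ 2
       - (V1' x * V2 x - V1 x * V2' x) * (2 * V2 x * V2' x)) / (V2 x ^ 2) ^ 2) (at x)"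
    using V2_pos[of x]
    by (auto intro!: derivative_eq_intros V_derivatives simp: power2_eq_square)
  ultimately show ?thesis
    using V2_pos[of x]
    by (simp add: V_second_derivatives ratio_slope_deriv_def ratio_slope_def field_simps power2_eq_square)
qed

lemma ratio_slope_pos_if_above:
  assumes "(wronskian \<longlongrightarrow> 0) at_bot" and "V2 x < V1 x"
  shows "0 < ratio_slope x"
proof -
  have "0 < exp (P x) * V2 x ^ 2 * ratio_slope x"
    using wronskian_pos_if_above[OF assms] by (simp only: wronskian_eq_ratio_slope)
  moreover have "0 < exp (P x) * V2 x ^ 2"
    using V2_pos[of x] by simp
  ultimately show ?thesis
    by (rule zero_less_mult_pos)
qed

lemma ratio_slope_deriv_lower_bound:
  assumes slope: "0 < ratio_slope y" and ratio: "1 + \<eta> \<le> V1 y / V2 y" "0 \<le> \<eta>"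
    and V: "\<delta> \<le> V2 y" "V1 y \<le> M" "0 < \<delta>"
    and p: "\<bar>p y\<bar> \<le> P0" and C: "\<bar>V2' y\<bar> \<le> C"
  shows "k * \<delta> * (\<delta> * \<eta>) / M \<le> ratio_slope_deriv y + (P0 + 2 * C / \<delta>) * ratio_slope y"
proof -
  have "2 * V2' y / V2 y \<le> 2 * C / \<delta>"
    using C V by (intro frac_le) auto
  then have "0 \<le> (P0 + 2 * C / \<delta> - (p y + 2 * V2' y / V2 y)) * ratio_slope y"
    using p slope by simp
  moreover have "\<delta> * \<eta> \<le> V1 y - V2 y"
  proof -
    have "\<delta> * \<eta> \<le> V2 y * (V1 y / V2 y - 1)"
      using ratio V by (intro mult_mono) auto
    also have "\<dots> = V1 y - V2 y"
      using V2_pos[of y] by (simp add: field_simps)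
    finally show ?thesis .
  qed
  moreover have "0 \<le> \<delta> * \<eta>"
    using V ratio by simp
  ultimately have "k * \<delta> * (\<delta> * \<eta>) / M \<le> k * V1 y * (V1 y - V2 y) / V2 y"
    using V k_pos V1_pos[of y] by (intro frac_le mult_mono) auto
  with \<open>0 \<le> (P0 + 2 * C / \<delta> - (p y + 2 * V2' y / V2 y)) * ratio_slope y\<close> show ?thesis
    by (simp add: ratio_slope_deriv_def algebra_simps)
qed

lemma not_above_on_half_line:
  assumes W0: "(wronskian \<longlongrightarrow> 0) at_bot" and above: "\<And>y. x \<le> y \<Longrightarrow> V2 y < V1 y"
    and M: "\<And>y. V1 y \<le> M" and \<delta>: "0 < \<delta>" "\<And>y. X0 \<le> y \<Longrightarrow> \<delta> \<le> V2 y"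
    and p: "\<And>y. \<bar>p y\<bar> \<le> P0" and C: "\<And>y. \<bar>V2' y\<bar> \<le> C"
  shows False
proof -
  define X where "X = max x X0"
  define w where "w y = V1 y / V2 y" for y
  have w': "(w has_real_derivative ratio_slope y) (at y)" for y
    using ratio_has_real_derivative by (simp add: w_def[abs_def])
  have slope_pos: "0 < ratio_slope y" if "X \<le> y" for y
    using ratio_slope_pos_if_above[OF W0 above] that by (simp add: X_def)
  have w_mono: "w X \<le> w y" if "X \<le> y" for y
  proof -
    have "0 * (y - X) \<le> w y - w X"
      using slope_pos by (intro DERIV_lower_bound_imp_growth[OF that w'] less_imp_le) simp
    then show ?thesis
      by simp
  qed
  define \<eta> where "\<eta> = w X - 1"
  have \<eta>: "0 < \<eta>"
    using above[of X] V2_pos[of X] by (simp add: \<eta>_def w_def X_def field_simps)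
  have V: "\<delta> \<le> V2 y" "V1 y \<le> M" if "X \<le> y" for y
    using \<delta>(2) M that by (auto simp: X_def)
  have w_bounds: "0 \<le> w y \<and> w y \<le> M / \<delta>" if "X \<le> y" for y
  proof -
    have "V1 y / V2 y \<le> M / V2 y"
      using M[of y] V2_pos[of y] by (intro divide_right_mono) auto
    also have "\<dots> \<le> M / \<delta>"
      using V[OF that] \<delta> V1_pos[of y] by (intro divide_left_mono) auto
    finally show ?thesis
      using V1_pos[of y] V2_pos[of y] by (simp add: w_def)
  qed
  have "k * \<delta> * (\<delta> * \<eta>) / M \<le> ratio_slope_deriv y + (P0 + 2 * C / \<delta>) * ratio_slope y"
    if "X \<le> y" for y
    using w_mono[OF that] \<eta> V[OF that] \<delta>
    by (intro ratio_slope_deriv_lower_bound slope_pos p C that) (simp_all add: \<eta>_def w_def)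
  moreover have "0 < k * \<delta> * (\<delta> * \<eta>) / M"
    using V[of X] \<delta> \<eta> k_pos V1_pos[of X] by simp
  moreover have "0 \<le> P0 + 2 * C / \<delta>"
    using p[of 0] C[of 0] \<delta> by simp
  ultimately show False
    using no_bounded_solution_of_growth_inequality[of X w ratio_slope ratio_slope_deriv]
      w' ratio_slope_has_real_derivative w_bounds by blast
qed

theorem comparison:
  assumes W0: "(wronskian \<longlongrightarrow> 0) at_bot"
    and M: "\<And>y. V1 y \<le> M" and \<delta>: "0 < \<delta>" "\<And>y. X0 \<le> y \<Longrightarrow> \<delta> \<le> V2 y"
    and p: "\<And>y. \<bar>p y\<bar> \<le> P0" and C: "\<And>y. \<bar>V2' y\<bar> \<le> C"
  shows "V1 x \<le> V2 x"
  using not_above_on_half_line[OF W0 stays_above[OF W0] M \<delta> p C, of x] by force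

end

section \<open>Solutions between an exponential and a positive barrier\<close>

definition front_bounded :: "real \<Rightarrow> real \<Rightarrow> real \<Rightarrow> real \<Rightarrow> real \<Rightarrow> (real \<Rightarrow> real) \<Rightarrow> bool" where
  "front_bounded M \<theta> x1 \<delta> X0 V \<longleftrightarrow>
     (\<forall>x. 0 \<le> V x \<and> V x \<le> M \<and> V x \<le> M * exp (\<theta> * (x - x1))) \<and> (\<forall>x\<ge>X0. \<delta> \<le> V x)"

lemma kpp_front_gradient_bound:
  assumes sol: "kpp_steady_state p q k V V' V''" and front: "front_bounded M \<theta> x1 \<delta> X0 V"
    and P: "\<And>y. (P has_real_derivative p y) (at y)"
    and p: "\<And>y. \<bar>p y\<bar> \<le> P0" and q: "\<And>y. \<bar>q y\<bar> \<le> Q0" and k: "0 \<le> k" and \<theta>: "0 \<le> \<theta>"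
  shows "\<bar>V' x\<bar> \<le> exp P0 * (2 + Q0 + k * M) * M"
    and "\<bar>V' x\<bar> \<le> exp P0 * (2 + Q0 + k * M) * (M * exp (\<theta> * (x + 1 - x1)))"
proof -
  have V: "0 \<le> V y" "V y \<le> M" "V y \<le> M * exp (\<theta> * (y - x1))" for y
    using front by (auto simp: front_bounded_def)
  have qV: "\<bar>q y - k * V y\<bar> \<le> Q0 + k * M" for y
  proof -
    have "0 \<le> k * V y" "k * V y \<le> k * M"
      using V[of y] k by (auto intro: mult_left_mono)
    then show ?thesis
      using q[of y] unfolding abs_le_iff by linarith
  qed
  show "\<bar>V' x\<bar> \<le> exp P0 * (2 + Q0 + k * M) * M"
    using kpp_steady_state_gradient_bound[OF sol P, where Q = "Q0 + k * M" and m = M] p qV V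
    by (simp add: add.assoc)
  have "V y \<le> M * exp (\<theta> * (x + 1 - x1))" if "y \<le> x + 1" for y
  proof -
    have "\<theta> * (y - x1) \<le> \<theta> * (x + 1 - x1)"
      using that \<theta> by (intro mult_left_mono) auto
    then have "M * exp (\<theta> * (y - x1)) \<le> M * exp (\<theta> * (x + 1 - x1))"
      using V(1,2)[of y] by (intro mult_left_mono) auto
    then show ?thesis
      using V(3)[of y] by linarith
  qed
  then show "\<bar>V' x\<bar> \<le> exp P0 * (2 + Q0 + k * M) * (M * exp (\<theta> * (x + 1 - x1)))"
    using kpp_steady_state_gradient_bound[OF sol P, where Q = "Q0 + k * M"] p qV V
    by (simp add: add.assoc)
qed

lemma kpp_front_wronskian_tendsto_0:
  assumes sol1: "kpp_steady_state p q k V1 V1' V1''" and front1: "front_bounded M \<theta> x1 \<delta> X0 V1"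
    and sol2: "kpp_steady_state p q k V2 V2' V2''" and front2: "front_bounded M \<theta> x1 \<delta> X0 V2"
    and P: "\<And>y. (P has_real_derivative p y) (at y)" "\<And>y. P y \<le> c * y"
    and p: "\<And>y. \<bar>p y\<bar> \<le> P0" and q: "\<And>y. \<bar>q y\<bar> \<le> Q0" and k: "0 \<le> k"
    and \<theta>: "0 \<le> \<theta>" and rate: "0 < c + 2 * \<theta>"
  shows "((\<lambda>x. exp (P x) * (V1' x * V2 x - V1 x * V2' x)) \<longlongrightarrow> 0) at_bot"
proof (rule Lim_null_comparison)
  define C0 where "C0 = exp P0 * (2 + Q0 + k * M)"
  define g where "g x = 2 * C0 * M * M * exp (\<theta> * (1 - 2 * x1)) * exp ((c + 2 * \<theta>) * x)" for x
  have "filterlim (\<lambda>x. (c + 2 * \<theta>) * x) at_bot at_bot"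
    using filterlim_tendsto_pos_mult_at_bot[OF tendsto_const rate filterlim_ident] by simp
  then have "((\<lambda>x. exp ((c + 2 * \<theta>) * x)) \<longlongrightarrow> 0) at_bot"
    by (rule filterlim_compose[OF exp_at_bot])
  then show "(g \<longlongrightarrow> 0) at_bot"
    unfolding g_def by (rule tendsto_mult_right_zero)
  show "\<forall>\<^sub>F x in at_bot. norm (exp (P x) * (V1' x * V2 x - V1 x * V2' x)) \<le> g x"
  proof (intro always_eventually allI)
    fix x
    define A1 A2 where "A1 = C0 * (M * exp (\<theta> * (x + 1 - x1)))" and "A2 = M * exp (\<theta> * (x - x1))"
    have V: "\<bar>V1 x\<bar> \<le> A2" "\<bar>V2 x\<bar> \<le> A2"
      using front1 front2 by (auto simp: front_bounded_def A2_def)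
    have V': "\<bar>V1' x\<bar> \<le> A1" "\<bar>V2' x\<bar> \<le> A1"
      using kpp_front_gradient_bound(2)[OF sol1 front1 P(1) p q k \<theta>]
        kpp_front_gradient_bound(2)[OF sol2 front2 P(1) p q k \<theta>]
      by (simp_all add: A1_def C0_def)
    have "\<bar>V1' x * V2 x - V1 x * V2' x\<bar> \<le> \<bar>V1' x\<bar> * \<bar>V2 x\<bar> + \<bar>V1 x\<bar> * \<bar>V2' x\<bar>"
      by (metis abs_mult abs_triangle_ineq4)
    also have "\<dots> \<le> 2 * A1 * A2"
    proof -
      have A: "0 \<le> A1" "0 \<le> A2"
        using V(1) V'(1) by (meson abs_ge_zero order_trans)+
      have "\<bar>V1' x\<bar> * \<bar>V2 x\<bar> \<le> A1 * A2" "\<bar>V1 x\<bar> * \<bar>V2' x\<bar> \<le> A2 * A1"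
        by (intro mult_mono V V' A abs_ge_zero)+
      then show ?thesis
        by (simp add: mult.commute[of A2 A1])
    qed
    finally have "norm (exp (P x) * (V1' x * V2 x - V1 x * V2' x)) \<le> exp (c * x) * (2 * A1 * A2)"
      using P(2)[of x] by (simp add: abs_mult) (intro mult_mono, auto)
    also have "\<dots> = g x"
      by (simp add: g_def A1_def A2_def mult_exp_exp algebra_simps flip: exp_add)
    finally show "norm (exp (P x) * (V1' x * V2 x - V1 x * V2' x)) \<le> g x" .
  qed
qed

lemma kpp_front_pos:
  assumes sol: "kpp_steady_state p q k V V' V''" and front: "front_bounded M \<theta> x1 \<delta> X0 V"
    and \<delta>: "0 < \<delta>" and p: "\<And>y. \<bar>p y\<bar> \<le> P0" and q: "\<And>y. \<bar>q y\<bar> \<le> Q0" and k: "0 \<le> k"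
  shows "0 < V x"
proof (rule kpp_steady_state_pos[OF sol _ p])
  have V: "0 \<le> V y" "V y \<le> M" for y
    using front by (auto simp: front_bounded_def)
  then show "0 \<le> V y" for y
    by simp
  show "\<bar>q y - k * V y\<bar> \<le> Q0 + k * M" for y
  proof -
    have "0 \<le> k * V y" "k * V y \<le> k * M"
      using V[of y] k by (auto intro: mult_left_mono)
    then show ?thesis
      using q[of y] unfolding abs_le_iff by linarith
  qed
  show "0 < V X0"
    using front \<delta> by (auto simp: front_bounded_def intro: less_le_trans)
qed

lemma kpp_front_unique:
  assumes sol1: "kpp_steady_state p q k V1 V1' V1''" and front1: "front_bounded M \<theta> x1 \<delta> X0 V1"
    and sol2: "kpp_steady_state p q k V2 V2' V2''" and front2: "front_bounded M \<theta> x1 \<delta> X0 V2"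
    and pos: "\<And>x. 0 < V1 x" "\<And>x. 0 < V2 x"
    and P: "\<And>y. (P has_real_derivative p y) (at y)" "\<And>y. P y \<le> c * y"
    and p: "\<And>y. \<bar>p y\<bar> \<le> P0" and q: "\<And>y. \<bar>q y\<bar> \<le> Q0" and k: "0 < k"
    and \<theta>: "0 \<le> \<theta>" and rate: "0 < c + 2 * \<theta>" and \<delta>: "0 < \<delta>"
  shows "V1 = V2"
proof
  fix x
  interpret V12: kpp_pair p q P k V1 V1' V1'' V2 V2' V2''
    using sol1 sol2 P(1) k pos by unfold_locales
  interpret V21: kpp_pair p q P k V2 V2' V2'' V1 V1' V1''
    using sol1 sol2 P(1) k pos by unfold_locales
  have bounds: "V1 y \<le> M" "V2 y \<le> M" "X0 \<le> y \<Longrightarrow> \<delta> \<le> V1 y" "X0 \<le> y \<Longrightarrow> \<delta> \<le> V2 y" for y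
    using front1 front2 by (auto simp: front_bounded_def)
  note gradient = kpp_front_gradient_bound(1)[OF _ _ P(1) p q less_imp_le[OF k] \<theta>]
  have "V1 x \<le> V2 x"
  proof (rule V12.comparison)
    show "(V12.wronskian \<longlongrightarrow> 0) at_bot"
      using kpp_front_wronskian_tendsto_0[OF sol1 front1 sol2 front2 P p q less_imp_le[OF k] \<theta> rate]
      by (simp add: V12.wronskian_def[abs_def])
  qed (use bounds \<delta> p gradient[OF sol2 front2] in auto)
  moreover have "V2 x \<le> V1 x"
  proof (rule V21.comparison)
    show "(V21.wronskian \<longlongrightarrow> 0) at_bot"
      using kpp_front_wronskian_tendsto_0[OF sol2 front2 sol1 front1 P p q less_imp_le[OF k] \<theta> rate]
      by (simp add: V21.wronskian_def[abs_def])
  qed (use bounds \<delta> p gradient[OF sol1 front1] in auto)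
  ultimately show "V1 x = V2 x"
    by simp
qed

lemma kpp_front_class_positive_unique:
  fixes S :: "(real \<Rightarrow> real) set" and is_sol :: "(real \<Rightarrow> real) \<Rightarrow> bool"
  assumes front: "\<And>V. V \<in> S \<Longrightarrow> front_bounded M \<theta> x1 \<delta> X0 V"
    and sol: "\<And>V. is_sol V \<Longrightarrow> \<exists>V' V''. kpp_steady_state p q k V V' V''"
    and P: "\<And>y. (P has_real_derivative p y) (at y)" "\<And>y. P y \<le> c * y"
    and pq: "\<And>y. \<bar>p y\<bar> \<le> P0" "\<And>y. \<bar>q y\<bar> \<le> Q0" and k: "0 < k"
    and \<theta>: "0 \<le> \<theta>" and rate: "0 < c + 2 * \<theta>" and \<delta>: "0 < \<delta>"
    and U: "U \<in> S" "is_sol U"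
  shows "(\<forall>x. 0 < U x) \<and> (\<forall>V\<in>S. (\<forall>x. 0 < V x) \<longrightarrow> is_sol V \<longrightarrow> V = U)"
proof -
  obtain U' U'' where U_sol: "kpp_steady_state p q k U U' U''"
    using sol[OF U(2)] by blast
  have U_pos: "0 < U x" for x
    using kpp_front_pos[OF U_sol front[OF U(1)] \<delta> pq] k by simp
  moreover have "V = U" if V: "V \<in> S" "\<forall>x. 0 < V x" "is_sol V" for V
  proof -
    obtain V' V'' where "kpp_steady_state p q k V V' V''"
      using sol[OF V(3)] by blast
    from kpp_front_unique[OF this front[OF V(1)] U_sol front[OF U(1)] _ U_pos P pq k \<theta> rate \<delta>]
    show ?thesis
      using V(2) by simp
  qed
  ultimately show ?thesis
    by blast
qed

section \<open>The elliptic problem\<close>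

lemma positive_root_right_of_vertex:
  fixes \<theta> c r :: real
  assumes "0 < \<theta>" and "\<theta>\<^sup>2 + c * \<theta> + r = 0" and "r < 0"
  shows "0 < c + 2 * \<theta>"
proof -
  have "0 < \<theta> * (\<theta> + c)"
    using assms(2,3) by (simp add: power2_eq_square algebra_simps)
  then have "0 < \<theta> + c"
    using assms(1) by (simp add: zero_less_mult_iff)
  with assms(1) show ?thesis
    by simp
qed

lemma elliptic_sol_as_kpp_steady_state:
  fixes chi nu mu b c M :: real and r u :: "real \<Rightarrow> real"
  assumes chi: "0 < chi" and nu: "0 < nu" and mu: "0 < mu"
    and u: "continuous_on UNIV u" "\<And>y. 0 \<le> u y" "\<And>y. u y \<le> M"
    and r: "bounded (range r)"
  obtains p q P :: "real \<Rightarrow> real" and P0 Q0 :: real where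
    "\<And>V. elliptic_sol chi nu mu b c r u V \<Longrightarrow> \<exists>V' V''. kpp_steady_state p q (b - chi * mu) V V' V''"
    and "\<And>y. (P has_real_derivative p y) (at y)" and "\<And>y. P y \<le> c * y"
    and "\<And>y. \<bar>p y\<bar> \<le> P0" and "\<And>y. \<bar>q y\<bar> \<le> Q0"
proof -
  obtain Psi' where Psi': "\<And>x. (Psi nu mu u has_real_derivative Psi' x) (at x)"
    and Psi: "\<And>x. 0 \<le> Psi nu mu u x" "\<And>x. Psi nu mu u x \<le> mu * M / nu"
    and Psi'_bound: "\<And>x. \<bar>Psi' x\<bar> \<le> mu * M / (2 * sqrt nu)"
    using Psi_properties[OF nu mu u] by blast
  obtain R where R: "\<And>x. \<bar>r x\<bar> \<le> R"
    using r by (auto simp: bounded_real)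
  define p q P where "p x = c - chi * Psi' x" and "q x = r x - chi * nu * Psi nu mu u x"
    and "P x = c * x - chi * Psi nu mu u x" for x
  show thesis
  proof (rule that[of p q P])
    show "\<exists>V' V''. kpp_steady_state p q (b - chi * mu) V V' V''"
      if "elliptic_sol chi nu mu b c r u V" for V
    proof -
      have "deriv (Psi nu mu u) x = Psi' x" for x
        by (rule DERIV_imp_deriv[OF Psi'])
      then show ?thesis
        using that unfolding elliptic_sol_def kpp_steady_state_def Aop_def p_def q_def
        by (simp add: algebra_simps)
    qed
    show "(P has_real_derivative p y) (at y)" for y
      unfolding P_def p_def by (auto intro!: derivative_eq_intros Psi')
    show "P y \<le> c * y" for y
      using Psi[of y] chi by (simp add: P_def)
    show "\<bar>p y\<bar> \<le> \<bar>c\<bar> + chi * (mu * M / (2 * sqrt nu))" for y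
    proof -
      have "\<bar>chi * Psi' y\<bar> \<le> chi * (mu * M / (2 * sqrt nu))"
        using mult_left_mono[OF Psi'_bound[of y], of chi] chi by (simp add: abs_mult)
      then show ?thesis
        using abs_triangle_ineq4[of c "chi * Psi' y"] by (simp add: p_def)
    qed
    show "\<bar>q y\<bar> \<le> R + chi * nu * (mu * M / nu)" for y
    proof -
      have "\<bar>chi * nu * Psi nu mu u y\<bar> \<le> chi * nu * (mu * M / nu)"
        using mult_left_mono[OF Psi(2)[of y], of "chi * nu"] Psi(1)[of y] chi nu by (simp add: abs_mult)
      then show ?thesis
        using R[of y] abs_triangle_ineq4[of "r y" "chi * nu * Psi nu mu u y"] by (simp add: q_def)
    qed
  qed
qed

lemma wave_plateau_pos:
  fixes chi mu b rstar eps :: real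
  assumes "0 < chi * mu" and "2 * chi * mu < b" and "eps < rstar * (b - 2 * chi * mu) / (b - chi * mu)"
  shows "0 < ((rstar - eps) * (b - chi * mu) - chi * mu * rstar) / (b - chi * mu) ^ 2"
proof -
  have "eps * (b - chi * mu) < rstar * (b - 2 * chi * mu)"
    using assms by (simp add: pos_less_divide_eq)
  then show ?thesis
    using assms by (simp add: algebra_simps)
qed

lemma E1_front_bounded:
  assumes wave: "decr_tw f ct phi A0 z" and A0: "0 < A0"
  obtains X0 where "\<And>V. V \<in> E1 rstar chi mu b theta1 x1 phi h \<Longrightarrow>
    front_bounded (rstar / (b - chi * mu)) theta1 x1 (A0 / 2) X0 V"
proof -
  obtain S0 where S0: "\<And>s. s \<le> S0 \<Longrightarrow> A0 / 2 < phi s"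
    using order_tendstoD(1)[of phi A0 at_bot "A0 / 2"] wave A0
    by (auto simp: decr_tw_def eventually_at_bot_linorder)
  show thesis
  proof (rule that[of "h - S0"])
    fix V assume "V \<in> E1 rstar chi mu b theta1 x1 phi h"
    then have "U1minus phi h x \<le> V x" "V x \<le> U1plus rstar chi mu b theta1 x1 x" for x
      by (auto simp: E1_def)
    moreover have "0 \<le> U1minus phi h x" for x
      by (simp add: U1minus_def)
    moreover have "A0 / 2 \<le> U1minus phi h x" if "h - S0 \<le> x" for x
      using S0[of "h - x"] that by (simp add: U1minus_def)
    ultimately show "front_bounded (rstar / (b - chi * mu)) theta1 x1 (A0 / 2) (h - S0) V"
      unfolding front_bounded_def U1plus_def by (meson min.boundedE order.trans)
  qed
qed

theorem lemma3p5:
  fixes chi b nu mu c rm rstar r1 x1 theta1 eps ctil h x0 :: real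
    and r phi u Ustar :: "real \<Rightarrow> real"
    and U :: "real \<Rightarrow> real \<Rightarrow> real"
  assumes chi: "chi > 0" and b: "b > 0" and nu: "nu > 0" and mu: "mu > 0"
    and b_gt: "b > 2 * chi * mu"
    and r_hoelder: "\<exists>C \<alpha>. 0 < \<alpha> \<and> \<alpha> \<le> 1 \<and> (\<forall>x y. \<bar>r x - r y\<bar> \<le> C * \<bar>x - y\<bar> powr \<alpha>)"
    and r_bdd: "bounded (range r)"
    and r_bot: "(r \<longlongrightarrow> rm) at_bot" and r_top: "(r \<longlongrightarrow> rstar) at_top"
    and rm_neg: "rm < 0" and rstar_pos: "0 < rstar"
    and r_range: "\<forall>x. rm \<le> r x \<and> r x \<le> rstar"
    and c_gt: "c > chi * mu * rstar / (2 * sqrt nu * (b - chi * mu))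
                   - 2 * sqrt (rstar * (b - 2 * chi * mu) / (b - chi * mu))"
    and r1: "rm < r1" "r1 < 0"
    and x1: "\<forall>x\<le>x1. r x \<le> r1"
    and theta1: "theta1 > 0" "theta1 ^ 2 + c * theta1 + r1 = 0"
    and eps: "0 < eps" "eps < rstar * (b - 2 * chi * mu) / (b - chi * mu)"
    and wave: "decr_tw (feps rstar chi mu b eps) ctil phi
                 (((rstar - eps) * (b - chi * mu) - chi * mu * rstar) / (b - chi * mu) ^ 2) (- eps)"
    and ctil: "ctil > 2 * sqrt (rstar * (b - 2 * chi * mu) / (b - chi * mu))
                 - (c - chi * mu * rstar / (2 * sqrt nu * (b - chi * mu))
                    + 2 * sqrt (rstar * (b - 2 * chi * mu) / (b - chi * mu))) / 2"
    and x0: "x0 > x1" "\<forall>x>x0. r x \<ge> rstar - eps" "phi (h - x0) = 0"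
    and u: "u \<in> E1 rstar chi mu b theta1 x1 phi h"
    and U: "parab_sol chi nu mu b c r u (U1plus rstar chi mu b theta1 x1) U"
    and U_lim: "\<forall>x. ((\<lambda>t. U t x) \<longlongrightarrow> Ustar x) at_top"
    and Ustar_E1: "Ustar \<in> E1 rstar chi mu b theta1 x1 phi h"
    and Ustar_sol: "elliptic_sol chi nu mu b c r u Ustar"
  shows "(\<forall>x. Ustar x > 0) \<and>
         (\<forall>V \<in> E1 rstar chi mu b theta1 x1 phi h.
            (\<forall>x. V x > 0) \<longrightarrow> elliptic_sol chi nu mu b c r u V \<longrightarrow> V = Ustar)"
proof -
  (* The decay rate needed at -infinity
     is c + 2 theta_1 > 0, which follows from r_1 < 0. *)
  define k A0 where "k = b - chi * mu" and "A0 = ((rstar - eps) * k - chi * mu * rstar) / k ^ 2"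
  have k: "0 < k"
    using b_gt mult_pos_pos[OF chi mu] by (simp add: k_def)
  have A0: "0 < A0"
    using wave_plateau_pos[OF mult_pos_pos[OF chi mu] b_gt eps(2)] by (simp add: A0_def k_def)
  obtain X0 where front: "\<And>V. V \<in> E1 rstar chi mu b theta1 x1 phi h \<Longrightarrow>
      front_bounded (rstar / k) theta1 x1 (A0 / 2) X0 V"
    using E1_front_bounded[OF wave[folded k_def, folded A0_def] A0] unfolding k_def by blast
  have "continuous_on UNIV u"
    using u by (auto simp: E1_def Cbunif_def intro: uniformly_continuous_imp_continuous)
  moreover have "0 \<le> u y" "u y \<le> rstar / k" for y
    using front[OF u] by (auto simp: front_bounded_def)
  ultimately obtain p q P P0 Q0 where
    sol: "\<And>V. elliptic_sol chi nu mu b c r u V \<Longrightarrow> \<exists>V' V''. kpp_steady_state p q k V V' V''"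
    and P: "\<And>y. (P has_real_derivative p y) (at y)" "\<And>y. P y \<le> c * y"
    and pq: "\<And>y. \<bar>p y\<bar> \<le> P0" "\<And>y. \<bar>q y\<bar> \<le> Q0"
    using elliptic_sol_as_kpp_steady_state[OF chi nu mu _ _ _ r_bdd, of u "rstar / k" b c]
    unfolding k_def by blast
  have rate: "0 < c + 2 * theta1"
    using positive_root_right_of_vertex theta1 r1(2) by blast
  from kpp_front_class_positive_unique[where S = "E1 rstar chi mu b theta1 x1 phi h"
      and is_sol = "elliptic_sol chi nu mu b c r u",
      OF front sol P pq k less_imp_le[OF theta1(1)] rate half_gt_zero[OF A0] Ustar_E1 Ustar_sol]
  show ?thesis
    by simp
qed

end
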